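(* Let $U\subset\mathbb{R}^m$ be open and connected and let $\phi=(\phi^1,\dots,\phi^n):U\to\mathbb{R}^n$ be a smooth horizontally weakly conformal map. Let $\Phi:U\times\mathbb{R}^m\to\mathbb{R}^n$, $\Phi^k(x,y)=\sum_{i=1}^m\frac{\partial\phi^k}{\partial x_i}(x)\,y_i$, be its complete lift. Then $\Phi$ is horizontally weakly conformal if and only if, at every $x\in U$, for all $\alpha,\beta\in\{1,\dots,n\}$, $$(\operatorname{hess}\phi^\alpha)^2=(\operatorname{hess}\phi^\beta)^2,$$ and for all $\alpha\neq\beta$, $$(\operatorname{hess}\phi^\alpha)(\operatorname{hess}\phi^\beta)=-(\operatorname{hess}\phi^\beta)(\operatorname{hess}\phi^\alpha),$$ where $\operatorname{hess}\phi^\alpha$ denotes the $m\times m$ Hessian matrix $\big(\frac{\partial^2\phi^\alpha}{\partial x_i\partial x_j}\big)$.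
   Context: A smooth map $\psi=(\psi^1,\dots,\psi^n)$ from an open subset of $\mathbb{R}^N$ to $\mathbb{R}^n$ is horizontally weakly conformal if there is a function $\lambda$ with $\sum_{i=1}^N\frac{\partial\psi^k}{\partial x_i}\frac{\partial\psi^l}{\partial x_i}=\lambda^2\delta_{kl}$ for all $k,l=1,\dots,n$ at every point. For $\Phi$ the coordinates are $(x_1,\dots,x_m,y_1,\dots,y_m)$. *)

theory Defs
  imports "HOL-Analysis.Analysis"
begin

definition pderiv_dir :: "('a::euclidean_space \<Rightarrow> real) \<Rightarrow> 'a \<Rightarrow> 'a \<Rightarrow> real" where
  "pderiv_dir f b x = frechet_derivative f (at x) b"

fun Ck_on :: "nat \<Rightarrow> 'a::euclidean_space set \<Rightarrow> ('a \<Rightarrow> real) \<Rightarrow> bool" where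
  "Ck_on 0 S f = continuous_on S f"
| "Ck_on (Suc k) S f = (f differentiable_on S \<and> (\<forall>b\<in>Basis. Ck_on k S (pderiv_dir f b)))"

definition smooth_on :: "'a::euclidean_space set \<Rightarrow> ('a \<Rightarrow> real ^ 'n) \<Rightarrow> bool" where
  "smooth_on S f \<longleftrightarrow> (\<forall>k. \<forall>c. Ck_on k S (\<lambda>x. f x $ c))"

definition horiz_weakly_conformal :: "'a::euclidean_space set \<Rightarrow> ('a \<Rightarrow> real ^ 'n) \<Rightarrow> bool" where
  "horiz_weakly_conformal S \<psi> \<longleftrightarrow>
     (\<exists>lam::'a \<Rightarrow> real. \<forall>x\<in>S. \<forall>k l.
        (\<Sum>b\<in>Basis. pderiv_dir (\<lambda>z. \<psi> z $ k) b x * pderiv_dir (\<lambda>z. \<psi> z $ l) b x)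
          = (lam x)\<^sup>2 * (if k = l then 1 else 0))"

definition hess :: "(real ^ 'm \<Rightarrow> real) \<Rightarrow> real ^ 'm \<Rightarrow> real ^ 'm ^ 'm" where
  "hess f x = (\<chi> i j. pderiv_dir (pderiv_dir f (axis j 1)) (axis i 1) x)"

definition complete_lift :: "(real ^ 'm \<Rightarrow> real ^ 'n) \<Rightarrow> (real ^ 'm) \<times> (real ^ 'm) \<Rightarrow> real ^ 'n" where
  "complete_lift \<phi> = (\<lambda>(x, y). \<chi> k. \<Sum>i\<in>UNIV. pderiv_dir (\<lambda>z. \<phi> z $ k) (axis i 1) x * y $ i)"

end

theory Submission
  imports Defs
begin

(* At (x, y) the differential of the k-th component of the complete lift is
   (hess phi^k x *v y, grad phi^k x).  Hessians of C^2 functions are symmetric (Schwarz), so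
     sum_b d_b Phi^k * d_b Phi^l = y . (H_k H_l y) + lambda(x)^2 delta_kl.
   Hence Phi is horizontally weakly conformal iff, pointwise, the quadratic form of H_k H_l
   vanishes for k ~= l, i.e. H_k H_l is skew, i.e. H_k H_l = - H_l H_k, and the quadratic
   forms of the symmetric matrices H_k^2 all coincide, i.e. H_k^2 = H_l^2. *)

lemma has_derivative_pderiv_dir_along_line:
  fixes f :: "'a::euclidean_space \<Rightarrow> real"
  assumes "f differentiable at (q + s *\<^sub>R u)"
  shows "((\<lambda>s. f (q + s *\<^sub>R u)) has_derivative (\<lambda>d. d * pderiv_dir f u (q + s *\<^sub>R u))) (at s within S)"
proof -
  have line: "((\<lambda>s. q + s *\<^sub>R u) has_derivative (\<lambda>d. d *\<^sub>R u)) (at s within S)"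
    by (auto intro!: derivative_eq_intros)
  have f': "(f has_derivative frechet_derivative f (at (q + s *\<^sub>R u))) (at (q + s *\<^sub>R u))"
    using assms frechet_derivative_works by blast
  have "((f \<circ> (\<lambda>s. q + s *\<^sub>R u)) has_derivative
      (frechet_derivative f (at (q + s *\<^sub>R u)) \<circ> (\<lambda>d. d *\<^sub>R u))) (at s within S)"
    by (rule diff_chain_within[OF line has_derivative_at_withinI[OF f']])
  moreover have "linear (frechet_derivative f (at (q + s *\<^sub>R u)))"
    using f' has_derivative_linear by blast
  ultimately show ?thesis
    by (simp add: o_def pderiv_dir_def linear_scale)
qed

lemma second_difference_mean_value:
  fixes f :: "'a::euclidean_space \<Rightarrow> real"
  assumes h: "0 < h" and U: "open U"
    and f: "f differentiable_on U" and fu: "pderiv_dir f u differentiable_on U"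
    and in_U: "\<And>s t. s \<in> {0..h} \<Longrightarrow> t \<in> {0..h} \<Longrightarrow> x + s *\<^sub>R u + t *\<^sub>R v \<in> U"
  obtains s t where "s \<in> {0..h}" "t \<in> {0..h}"
    "f (x + h *\<^sub>R u + h *\<^sub>R v) - f (x + h *\<^sub>R u) - f (x + h *\<^sub>R v) + f x
       = h * h * pderiv_dir (pderiv_dir f u) v (x + s *\<^sub>R u + t *\<^sub>R v)"
proof -
  have diff_at: "g differentiable at z" if "g differentiable_on U" "z \<in> U" for g :: "'a \<Rightarrow> real" and z
    using that U by (simp add: differentiable_on_eq_differentiable_at)
  define G where "G s = f (x + h *\<^sub>R v + s *\<^sub>R u) - f (x + s *\<^sub>R u)" for s
  have "\<exists>s\<in>{0<..<h}. G h - G 0 = (\<lambda>d. d * pderiv_dir f u (x + h *\<^sub>R v + s *\<^sub>R u)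
                                       - d * pderiv_dir f u (x + s *\<^sub>R u)) (h - 0)"
    unfolding G_def
  proof (rule mvt_simple[OF h])
    fix s assume "0 \<le> s" "s \<le> h"
    then have mem: "x + h *\<^sub>R v + s *\<^sub>R u \<in> U" "x + s *\<^sub>R u \<in> U"
      using in_U[of s h] in_U[of s 0] h by (simp_all add: add_ac)
    show "((\<lambda>s. f (x + h *\<^sub>R v + s *\<^sub>R u) - f (x + s *\<^sub>R u)) has_derivative
        (\<lambda>d. d * pderiv_dir f u (x + h *\<^sub>R v + s *\<^sub>R u) - d * pderiv_dir f u (x + s *\<^sub>R u))) (at s within {0..h})"
      by (intro has_derivative_diff has_derivative_pderiv_dir_along_line diff_at[OF f] mem)
  qed
  then obtain s where s: "s \<in> {0<..<h}" and
    G_diff: "G h - G 0 = h * (pderiv_dir f u (x + s *\<^sub>R u + h *\<^sub>R v) - pderiv_dir f u (x + s *\<^sub>R u + 0 *\<^sub>R v))"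
    by (auto simp: algebra_simps)
  have "\<exists>t\<in>{0<..<h}. pderiv_dir f u (x + s *\<^sub>R u + h *\<^sub>R v) - pderiv_dir f u (x + s *\<^sub>R u + 0 *\<^sub>R v)
     = (\<lambda>d. d * pderiv_dir (pderiv_dir f u) v (x + s *\<^sub>R u + t *\<^sub>R v)) (h - 0)"
  proof (rule mvt_simple[OF h])
    fix t assume "0 \<le> t" "t \<le> h"
    then have mem: "x + s *\<^sub>R u + t *\<^sub>R v \<in> U" using in_U s by simp
    show "((\<lambda>t. pderiv_dir f u (x + s *\<^sub>R u + t *\<^sub>R v)) has_derivative
        (\<lambda>d. d * pderiv_dir (pderiv_dir f u) v (x + s *\<^sub>R u + t *\<^sub>R v))) (at t within {0..h})"
      by (intro has_derivative_pderiv_dir_along_line diff_at[OF fu] mem)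
  qed
  then obtain t where t: "t \<in> {0<..<h}" and
    fu_diff: "pderiv_dir f u (x + s *\<^sub>R u + h *\<^sub>R v) - pderiv_dir f u (x + s *\<^sub>R u + 0 *\<^sub>R v)
       = h * pderiv_dir (pderiv_dir f u) v (x + s *\<^sub>R u + t *\<^sub>R v)"
    by auto
  have "f (x + h *\<^sub>R u + h *\<^sub>R v) - f (x + h *\<^sub>R u) - f (x + h *\<^sub>R v) + f x = G h - G 0"
    by (simp add: G_def add_ac)
  also have "\<dots> = h * h * pderiv_dir (pderiv_dir f u) v (x + s *\<^sub>R u + t *\<^sub>R v)"
    using G_diff fu_diff by simp
  finally show ?thesis
    using s t that[of s t] by simp
qed

lemma parallelogram_subset_ball:
  fixes x u v :: "'a::real_normed_vector"
  assumes "s \<in> {0..h}" "t \<in> {0..h}" "h * (norm u + norm v) < r"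
  shows "x + s *\<^sub>R u + t *\<^sub>R v \<in> ball x r"
proof -
  have "dist x (x + s *\<^sub>R u + t *\<^sub>R v) = norm (s *\<^sub>R u + t *\<^sub>R v)"
    by (simp add: dist_norm norm_minus_commute add_ac)
  also have "\<dots> \<le> s * norm u + t * norm v"
    using assms norm_triangle_ineq[of "s *\<^sub>R u" "t *\<^sub>R v"] by auto
  also have "\<dots> \<le> h * (norm u + norm v)"
    using assms by (simp add: distrib_left add_mono mult_right_mono)
  finally show ?thesis
    using assms by simp
qed

lemma mixed_pderiv_dir_meet_in_ball:
  fixes f :: "'a::euclidean_space \<Rightarrow> real"
  assumes U: "open U" and d: "d > 0" "ball x d \<subseteq> U"
    and f: "f differentiable_on U"
    and fu: "pderiv_dir f u differentiable_on U" and fv: "pderiv_dir f v differentiable_on U"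
  obtains p q where "p \<in> ball x d" "q \<in> ball x d"
    "pderiv_dir (pderiv_dir f u) v p = pderiv_dir (pderiv_dir f v) u q"
proof -
  define h where "h = d / (norm u + norm v + 1)"
  have "norm u + norm v + 1 > 0"
    by (simp add: add_nonneg_pos)
  then have h: "h > 0" "h * (norm u + norm v) < d"
    using d by (simp_all add: h_def divide_simps)
  have near_uv: "x + s *\<^sub>R u + t *\<^sub>R v \<in> ball x d"
    and near_vu: "x + s *\<^sub>R v + t *\<^sub>R u \<in> ball x d" if "s \<in> {0..h}" "t \<in> {0..h}" for s t
    using parallelogram_subset_ball[OF that h(2)] parallelogram_subset_ball[OF that, of v u d x] h(2)
    by (simp_all add: add.commute)
  obtain s t where st: "s \<in> {0..h}" "t \<in> {0..h}"
    "f (x + h *\<^sub>R u + h *\<^sub>R v) - f (x + h *\<^sub>R u) - f (x + h *\<^sub>R v) + f x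
       = h * h * pderiv_dir (pderiv_dir f u) v (x + s *\<^sub>R u + t *\<^sub>R v)"
    using second_difference_mean_value[OF h(1) U f fu] near_uv d(2) by blast
  obtain s' t' where st': "s' \<in> {0..h}" "t' \<in> {0..h}"
    "f (x + h *\<^sub>R v + h *\<^sub>R u) - f (x + h *\<^sub>R v) - f (x + h *\<^sub>R u) + f x
       = h * h * pderiv_dir (pderiv_dir f v) u (x + s' *\<^sub>R v + t' *\<^sub>R u)"
    using second_difference_mean_value[OF h(1) U f fv] near_vu d(2) by blast
  have swap: "x + h *\<^sub>R v + h *\<^sub>R u = x + h *\<^sub>R u + h *\<^sub>R v"
    by (simp add: add_ac)
  have "h * h * pderiv_dir (pderiv_dir f u) v (x + s *\<^sub>R u + t *\<^sub>R v)
      = h * h * pderiv_dir (pderiv_dir f v) u (x + s' *\<^sub>R v + t' *\<^sub>R u)"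
    using st(3) st'(3)[unfolded swap] by linarith
  then show thesis
    using that near_uv[OF st(1,2)] near_vu[OF st'(1,2)] h(1) by simp
qed

lemma pderiv_dir_commute:
  fixes f :: "'a::euclidean_space \<Rightarrow> real"
  assumes U: "open U" "x \<in> U"
    and f: "f differentiable_on U"
    and fu: "pderiv_dir f u differentiable_on U" and fv: "pderiv_dir f v differentiable_on U"
    and fuv: "continuous_on U (pderiv_dir (pderiv_dir f u) v)"
    and fvu: "continuous_on U (pderiv_dir (pderiv_dir f v) u)"
  shows "pderiv_dir (pderiv_dir f u) v x = pderiv_dir (pderiv_dir f v) u x"
proof -
  let ?Fuv = "pderiv_dir (pderiv_dir f u) v" and ?Fvu = "pderiv_dir (pderiv_dir f v) u"
  have "\<bar>?Fuv x - ?Fvu x\<bar> < 2 * e" if e: "e > 0" for e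
  proof -
    obtain r where r: "r > 0" "ball x r \<subseteq> U"
      using U open_contains_ball by blast
    obtain d1 where d1: "d1 > 0" "\<And>p. p \<in> U \<Longrightarrow> dist p x < d1 \<Longrightarrow> dist (?Fuv p) (?Fuv x) < e"
      using fuv U e unfolding continuous_on_iff by metis
    obtain d2 where d2: "d2 > 0" "\<And>q. q \<in> U \<Longrightarrow> dist q x < d2 \<Longrightarrow> dist (?Fvu q) (?Fvu x) < e"
      using fvu U e unfolding continuous_on_iff by metis
    define d where "d = min r (min d1 d2)"
    have d: "d > 0" "ball x d \<subseteq> U"
      using r d1 d2 by (auto simp: d_def)
    obtain p q where pq: "p \<in> ball x d" "q \<in> ball x d" "?Fuv p = ?Fvu q"
      using mixed_pderiv_dir_meet_in_ball[OF U(1) d f fu fv] by blast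
    have "p \<in> U" "q \<in> U" "dist p x < d1" "dist q x < d2"
      using pq d(2) by (auto simp: d_def dist_commute)
    then have "\<bar>?Fuv p - ?Fuv x\<bar> < e" "\<bar>?Fvu q - ?Fvu x\<bar> < e"
      using d1(2) d2(2) by (simp_all add: dist_real_def)
    then show ?thesis
      using pq(3) by linarith
  qed
  from this[of "\<bar>?Fuv x - ?Fvu x\<bar> / 2"] show ?thesis
    by (cases "?Fuv x = ?Fvu x") auto
qed

lemma hess_symmetric:
  assumes "open U" "x \<in> U" "Ck_on 2 U f"
  shows "transpose (hess f x) = hess f x"
proof -
  have "pderiv_dir (pderiv_dir f (axis i 1)) (axis j 1) x = pderiv_dir (pderiv_dir f (axis j 1)) (axis i 1) x"
    for i j :: 'a
    using assms by (intro pderiv_dir_commute) (auto simp: numeral_2_eq_2)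
  then show ?thesis
    by (simp add: hess_def transpose_def vec_eq_iff)
qed

lemma quadratic_form_eq_0_iff:
  fixes A :: "real^'m^'m"
  shows "(\<forall>y. y \<bullet> (A *v y) = 0) \<longleftrightarrow> transpose A = - A"
proof
  assume q: "\<forall>y. y \<bullet> (A *v y) = 0"
  have entry: "axis i 1 \<bullet> (A *v axis j 1) = A $ i $ j" for i j
    by (simp add: inner_axis' matrix_vector_mult_basis column_def)
  have "A $ i $ j + A $ j $ i = 0" for i j
    using q[rule_format, of "axis i 1 + axis j 1"] q[rule_format, of "axis i 1"] q[rule_format, of "axis j 1"]
    by (simp add: matrix_vector_right_distrib inner_add_left inner_add_right entry)
  then show "transpose A = - A"
    by (simp add: vec_eq_iff transpose_def eq_neg_iff_add_eq_0)
next
  assume skew: "transpose A = - A"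
  show "\<forall>y. y \<bullet> (A *v y) = 0"
  proof
    fix y :: "real^'m"
    have neg: "(- A) *v y = - (A *v y)"
      by (simp add: vec_eq_iff matrix_vector_mult_def sum_negf)
    have "y \<bullet> (A *v y) = (transpose A *v y) \<bullet> y"
      by (simp add: dot_lmul_matrix)
    also have "\<dots> = - (y \<bullet> (A *v y))"
      by (simp only: skew neg inner_minus_left inner_minus_right inner_commute)
    finally show "y \<bullet> (A *v y) = 0"
      by simp
  qed
qed

lemma symmetric_quadratic_form_eq_iff:
  fixes A B :: "real^'m^'m"
  assumes "transpose A = A" "transpose B = B"
  shows "(\<forall>y. y \<bullet> (A *v y) = y \<bullet> (B *v y)) \<longleftrightarrow> A = B"
proof -
  have "transpose (A - B) = transpose A - transpose B"
    by (simp add: transpose_def vec_eq_iff)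
  then have "transpose (A - B) = A - B"
    using assms by simp
  have "(\<forall>y. y \<bullet> (A *v y) = y \<bullet> (B *v y)) \<longleftrightarrow> (\<forall>y. y \<bullet> ((A - B) *v y) = 0)"
    by (simp add: matrix_vector_mult_diff_rdistrib inner_diff_right)
  also have "\<dots> \<longleftrightarrow> A - B = - (A - B)"
    by (simp add: quadratic_form_eq_0_iff \<open>transpose (A - B) = A - B\<close>)
  also have "\<dots> \<longleftrightarrow> A = B"
    by (auto simp: vec_eq_iff)
  finally show ?thesis .
qed

lemma inner_matrix_vector_mult:
  fixes A B :: "real^'m^'k"
  shows "(A *v x) \<bullet> (B *v y) = x \<bullet> ((transpose A ** B) *v y)"
  by (metis dot_lmul_matrix matrix_vector_mul_assoc vector_transpose_matrix)

lemma ex_square_eq_add_iff_constant: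
  fixes q :: "'a \<Rightarrow> real"
  assumes "\<And>k. 0 \<le> q k" and "0 \<le> c"
  shows "(\<exists>L. \<forall>k. q k + c = L\<^sup>2) \<longleftrightarrow> (\<forall>a b. q a = q b)"
proof
  assume "\<forall>a b. q a = q b"
  then have "q k + c = (sqrt (q undefined + c))\<^sup>2" for k
    using assms by simp
  then show "\<exists>L. \<forall>k. q k + c = L\<^sup>2"
    by blast
next
  assume "\<exists>L. \<forall>k. q k + c = L\<^sup>2"
  then obtain L where "\<And>k. q k + c = L\<^sup>2"
    by blast
  then show "\<forall>a b. q a = q b"
    by (metis add_right_cancel)
qed

lemma plus_delta_eq_delta_iff:
  fixes M :: "'n \<Rightarrow> 'n \<Rightarrow> real"
  shows "(\<forall>k l. M k l + c * (if k = l then 1 else 0) = L * (if k = l then 1 else 0))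
     \<longleftrightarrow> (\<forall>k. M k k + c = L) \<and> (\<forall>a b. a \<noteq> b \<longrightarrow> M a b = 0)"
proof (intro iffI conjI allI impI)
  fix k :: 'n assume "\<forall>k l. M k l + c * (if k = l then 1 else 0) = L * (if k = l then 1 else 0)"
  from this[rule_format, of k k] show "M k k + c = L"
    by simp
next
  fix a b :: 'n assume "\<forall>k l. M k l + c * (if k = l then 1 else 0) = L * (if k = l then 1 else 0)" "a \<noteq> b"
  from this(1)[rule_format, of a b] this(2) show "M a b = 0"
    by simp
next
  fix k l :: 'n assume "(\<forall>k. M k k + c = L) \<and> (\<forall>a b. a \<noteq> b \<longrightarrow> M a b = 0)"
  then show "M k l + c * (if k = l then 1 else 0) = L * (if k = l then 1 else 0)"
    by (cases "k = l") simp_all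
qed

lemma symmetric_matrices_conformal_iff:
  fixes H :: "'n \<Rightarrow> real^'m^'m" and c :: real
  assumes sym: "\<And>k. transpose (H k) = H k" and c: "0 \<le> c"
  shows "(\<forall>y. \<exists>L. \<forall>k l. y \<bullet> ((H k ** H l) *v y) + c * (if k = l then 1 else 0)
                        = L\<^sup>2 * (if k = l then 1 else 0))
     \<longleftrightarrow> (\<forall>a b. H a ** H a = H b ** H b) \<and> (\<forall>a b. a \<noteq> b \<longrightarrow> H a ** H b = - (H b ** H a))"
    (is "?conformal \<longleftrightarrow> ?squares \<and> ?anticommute")
proof -
  let ?q = "\<lambda>k y. y \<bullet> ((H k ** H k) *v y)"
  have transpose_mult: "transpose (H a ** H b) = H b ** H a" for a b
    by (simp add: matrix_transpose_mul sym)
  have q_nonneg: "0 \<le> ?q k y" for k y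
    using inner_matrix_vector_mult[of "H k" y "H k" y] sym[of k] inner_ge_zero[of "H k *v y"] by simp
  have "?conformal \<longleftrightarrow> (\<forall>y. \<exists>L. \<forall>k. ?q k y + c = L\<^sup>2)
      \<and> (\<forall>a b. a \<noteq> b \<longrightarrow> (\<forall>y. y \<bullet> ((H a ** H b) *v y) = 0))"
    unfolding plus_delta_eq_delta_iff ex_simps all_conj_distrib by (intro conj_cong refl) blast
  also have "\<dots> \<longleftrightarrow> ?squares \<and> ?anticommute"
  proof (rule conj_cong)
    have "(\<forall>y. \<exists>L. \<forall>k. ?q k y + c = L\<^sup>2) \<longleftrightarrow> (\<forall>a b. \<forall>y. ?q a y = ?q b y)"
      unfolding ex_square_eq_add_iff_constant[OF q_nonneg c] by blast
    also have "\<dots> \<longleftrightarrow> ?squares"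
      by (simp add: symmetric_quadratic_form_eq_iff transpose_mult)
    finally show "(\<forall>y. \<exists>L. \<forall>k. ?q k y + c = L\<^sup>2) \<longleftrightarrow> ?squares" .
    have "(\<forall>y. y \<bullet> ((H a ** H b) *v y) = 0) \<longleftrightarrow> H a ** H b = - (H b ** H a)" for a b
      unfolding quadratic_form_eq_0_iff transpose_mult by (rule equation_minus_iff)
    then show "(\<forall>a b. a \<noteq> b \<longrightarrow> (\<forall>y. y \<bullet> ((H a ** H b) *v y) = 0)) \<longleftrightarrow> ?anticommute"
      by simp
  qed
  finally show ?thesis .
qed

lemma sum_Basis_vec:
  "(\<Sum>b\<in>(Basis :: (real^'m) set). F b) = (\<Sum>i\<in>UNIV. F (axis i 1))"
proof -
  have "inj (\<lambda>i::'m. axis i (1::real))"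
    by (auto intro!: injI simp: axis_eq_axis)
  moreover have "(Basis :: (real^'m) set) = range (\<lambda>i. axis i 1)"
    by (auto simp: Basis_vec_def)
  ultimately show ?thesis
    using sum.reindex[of "\<lambda>i::'m. axis i (1::real)" UNIV F] by (simp add: o_def)
qed

lemma sum_Basis_prod:
  "(\<Sum>b\<in>(Basis :: ('a::euclidean_space \<times> 'b::euclidean_space) set). F b)
     = (\<Sum>u\<in>Basis. F (u, 0)) + (\<Sum>v\<in>Basis. F (0, v))"
proof -
  have "inj_on (\<lambda>u. (u::'a, 0::'b)) Basis" "inj_on (\<lambda>v. (0::'a, v::'b)) Basis"
    by (auto intro!: inj_onI)
  then show ?thesis
    by (subst Basis_prod_def, subst sum.union_disjoint) (auto simp: sum.reindex)
qed

lemma has_derivative_sum_mult_snd: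
  fixes g :: "'m::finite \<Rightarrow> 'a::real_normed_vector \<Rightarrow> real"
  assumes "\<And>i. g i differentiable at x"
  shows "((\<lambda>z. \<Sum>i\<in>UNIV. g i (fst z) * snd z $ i) has_derivative
     (\<lambda>d. \<Sum>i\<in>UNIV. g i x * snd d $ i + frechet_derivative (g i) (at x) (fst d) * y $ i)) (at (x, y))"
proof (rule has_derivative_sum)
  fix i
  have "(g i has_derivative frechet_derivative (g i) (at x)) (at (fst (x, y)))"
    using assms by (simp add: frechet_derivative_works[symmetric])
  from diff_chain_at[OF has_derivative_fst[OF has_derivative_ident] this]
  have g: "((\<lambda>z. g i (fst z)) has_derivative (\<lambda>d. frechet_derivative (g i) (at x) (fst d))) (at (x, y))"
    by (simp add: o_def)
  have "bounded_linear (\<lambda>d::'a \<times> (real^'m). snd d $ i)"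
    using bounded_linear_compose[OF bounded_linear_vec_nth[of i] bounded_linear_snd] by (simp add: o_def)
  then have y: "((\<lambda>z. snd z $ i) has_derivative (\<lambda>d. snd d $ i)) (at (x, y))"
    by (rule bounded_linear_imp_has_derivative)
  show "((\<lambda>z. g i (fst z) * snd z $ i) has_derivative
     (\<lambda>d. g i x * snd d $ i + frechet_derivative (g i) (at x) (fst d) * y $ i)) (at (x, y))"
    using has_derivative_mult[OF g y] by simp
qed

lemma pderiv_dir_complete_lift:
  fixes \<phi> :: "real^'m \<Rightarrow> real^'n"
  assumes "\<And>i. pderiv_dir (\<lambda>z. \<phi> z $ k) (axis i 1) differentiable at x"
  shows "pderiv_dir (\<lambda>p. complete_lift \<phi> p $ k) (axis j 1, 0) (x, y) = (hess (\<lambda>z. \<phi> z $ k) x *v y) $ j"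
    and "pderiv_dir (\<lambda>p. complete_lift \<phi> p $ k) (0, axis j 1) (x, y) = pderiv_dir (\<lambda>z. \<phi> z $ k) (axis j 1) x"
proof -
  let ?g = "\<lambda>i. pderiv_dir (\<lambda>z. \<phi> z $ k) (axis i 1)"
  have "(\<lambda>p. complete_lift \<phi> p $ k) = (\<lambda>p. \<Sum>i\<in>UNIV. ?g i (fst p) * snd p $ i)"
    by (auto simp: complete_lift_def)
  then have lift_derivative: "frechet_derivative (\<lambda>p. complete_lift \<phi> p $ k) (at (x, y))
      = (\<lambda>d. \<Sum>i\<in>UNIV. ?g i x * snd d $ i + frechet_derivative (?g i) (at x) (fst d) * y $ i)"
    using has_derivative_sum_mult_snd[of ?g, OF assms] by (simp add: frechet_derivative_at[symmetric])
  show "pderiv_dir (\<lambda>p. complete_lift \<phi> p $ k) (axis j 1, 0) (x, y) = (hess (\<lambda>z. \<phi> z $ k) x *v y) $ j"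
    by (simp add: pderiv_dir_def lift_derivative matrix_vector_mult_def hess_def)
  have "frechet_derivative (?g i) (at x) 0 = 0" for i
    using assms[of i] frechet_derivative_works has_derivative_linear linear_0 by metis
  then have "pderiv_dir (\<lambda>p. complete_lift \<phi> p $ k) (0, axis j 1) (x, y) = (\<chi> i. ?g i x) \<bullet> axis j 1"
    by (simp add: pderiv_dir_def[of "\<lambda>p. complete_lift \<phi> p $ k"] lift_derivative inner_vec_def)
  then show "pderiv_dir (\<lambda>p. complete_lift \<phi> p $ k) (0, axis j 1) (x, y) = ?g j x"
    by (simp add: inner_axis)
qed

lemma complete_lift_sum_pderiv_products:
  fixes \<phi> :: "real^'m \<Rightarrow> real^'n"
  assumes "\<And>k i. pderiv_dir (\<lambda>z. \<phi> z $ k) (axis i 1) differentiable at x"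
  shows "(\<Sum>b\<in>Basis. pderiv_dir (\<lambda>p. complete_lift \<phi> p $ k) b (x, y)
                    * pderiv_dir (\<lambda>p. complete_lift \<phi> p $ l) b (x, y))
    = (hess (\<lambda>z. \<phi> z $ k) x *v y) \<bullet> (hess (\<lambda>z. \<phi> z $ l) x *v y)
      + (\<Sum>b\<in>Basis. pderiv_dir (\<lambda>z. \<phi> z $ k) b x * pderiv_dir (\<lambda>z. \<phi> z $ l) b x)"
  by (simp add: sum_Basis_prod sum_Basis_vec pderiv_dir_complete_lift assms inner_vec_def)

lemma horiz_weakly_conformal_Times_UNIV_iff:
  "horiz_weakly_conformal (U \<times> UNIV) \<psi> \<longleftrightarrow>
     (\<forall>x\<in>U. \<forall>y. \<exists>L. \<forall>k l.
        (\<Sum>b\<in>Basis. pderiv_dir (\<lambda>p. \<psi> p $ k) b (x, y) * pderiv_dir (\<lambda>p. \<psi> p $ l) b (x, y))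
          = L\<^sup>2 * (if k = l then 1 else 0))"
proof -
  have "horiz_weakly_conformal (U \<times> UNIV) \<psi> \<longleftrightarrow>
      (\<forall>p\<in>U \<times> UNIV. \<exists>L. \<forall>k l.
         (\<Sum>b\<in>Basis. pderiv_dir (\<lambda>p. \<psi> p $ k) b p * pderiv_dir (\<lambda>p. \<psi> p $ l) b p)
           = L\<^sup>2 * (if k = l then 1 else 0))"
    unfolding horiz_weakly_conformal_def by (rule bchoice_iff[symmetric])
  then show ?thesis
    by simp
qed

theorem theorem2p7:
  fixes U :: "(real ^ 'm) set" and \<phi> :: "real ^ 'm \<Rightarrow> real ^ 'n"
  assumes "open U" and "connected U"
    and "smooth_on U \<phi>"
    and "horiz_weakly_conformal U \<phi>"
  shows "horiz_weakly_conformal (U \<times> UNIV) (complete_lift \<phi>) \<longleftrightarrow>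
    (\<forall>x\<in>U. (\<forall>\<alpha> \<beta>. hess (\<lambda>z. \<phi> z $ \<alpha>) x ** hess (\<lambda>z. \<phi> z $ \<alpha>) x
                   = hess (\<lambda>z. \<phi> z $ \<beta>) x ** hess (\<lambda>z. \<phi> z $ \<beta>) x)
          \<and> (\<forall>\<alpha> \<beta>. \<alpha> \<noteq> \<beta> \<longrightarrow> hess (\<lambda>z. \<phi> z $ \<alpha>) x ** hess (\<lambda>z. \<phi> z $ \<beta>) x
                   = - (hess (\<lambda>z. \<phi> z $ \<beta>) x ** hess (\<lambda>z. \<phi> z $ \<alpha>) x)))"
proof -
  (* The argument is pointwise in x. *)
  let ?H = "\<lambda>x k. hess (\<lambda>z. \<phi> z $ k) x"
  have C2: "Ck_on 2 U (\<lambda>z. \<phi> z $ k)" for k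
    using \<open>smooth_on U \<phi>\<close> unfolding smooth_on_def by blast
  have partials_differentiable: "pderiv_dir (\<lambda>z. \<phi> z $ k) (axis i 1) differentiable at x" if "x \<in> U" for k i x
    using C2[of k] that \<open>open U\<close> by (simp add: numeral_2_eq_2 differentiable_on_eq_differentiable_at)
  obtain lam where lam: "\<And>x k l. x \<in> U \<Longrightarrow>
      (\<Sum>b\<in>Basis. pderiv_dir (\<lambda>z. \<phi> z $ k) b x * pderiv_dir (\<lambda>z. \<phi> z $ l) b x)
        = (lam x)\<^sup>2 * (if k = l then 1 else 0)"
    using \<open>horiz_weakly_conformal U \<phi>\<close> unfolding horiz_weakly_conformal_def by blast
  have lift: "(\<Sum>b\<in>Basis. pderiv_dir (\<lambda>p. complete_lift \<phi> p $ k) b (x, y)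
                    * pderiv_dir (\<lambda>p. complete_lift \<phi> p $ l) b (x, y))
      = y \<bullet> ((?H x k ** ?H x l) *v y) + (lam x)\<^sup>2 * (if k = l then 1 else 0)" if "x \<in> U" for x y k l
    using complete_lift_sum_pderiv_products[OF partials_differentiable[OF that]] lam[OF that]
      inner_matrix_vector_mult[of "?H x k" y "?H x l" y] hess_symmetric[OF \<open>open U\<close> that C2]
    by simp
  have "horiz_weakly_conformal (U \<times> UNIV) (complete_lift \<phi>) \<longleftrightarrow>
      (\<forall>x\<in>U. \<forall>y. \<exists>L. \<forall>k l. y \<bullet> ((?H x k ** ?H x l) *v y) + (lam x)\<^sup>2 * (if k = l then 1 else 0)
                            = L\<^sup>2 * (if k = l then 1 else 0))"
    unfolding horiz_weakly_conformal_Times_UNIV_iff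
    by (intro ball_cong all_cong1 ex_cong1 refl) (simp only: lift)
  also have "\<dots> \<longleftrightarrow> (\<forall>x\<in>U. (\<forall>\<alpha> \<beta>. ?H x \<alpha> ** ?H x \<alpha> = ?H x \<beta> ** ?H x \<beta>)
                    \<and> (\<forall>\<alpha> \<beta>. \<alpha> \<noteq> \<beta> \<longrightarrow> ?H x \<alpha> ** ?H x \<beta> = - (?H x \<beta> ** ?H x \<alpha>)))"
    by (rule ball_cong[OF refl], rule symmetric_matrices_conformal_iff)
      (auto intro: hess_symmetric[OF \<open>open U\<close> _ C2])
  finally show ?thesis .
qed

end
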